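(* Let $w$, $H$ and $m\ge2$ be fixed (not depending on $n$). Then $\sigma^2_{m,n;r}=O(n^{2m-r})$ as $n\to\infty$ for every $r\in[m]$. Moreover the following are equivalent: (i) $\rho_{m,n;1}=\Omega(1)$ as $n\to\infty$; (ii) $\sigma^2_{m,n;1}=0$ (for some, equivalently all, $n\ge m$); (iii) $\sum_{H'\in\mathcal G_H(\{1,\dots,m\})}\mathbb E\big[\prod_{(s,t)\in E(H')}w(U_s,U_t)\mid U_1\big]$ is almost surely constant; (iv) for almost every $x\in[0,1]$, $$\frac1m\sum_{i=1}^m\mathbb E\Big[\prod_{(s,t)\in E(H)}w(U_s,U_t)\,\Big|\,U_i=x\Big]=\mathbb E\Big[\prod_{(s,t)\in E(H)}w(U_s,U_t)\Big].$$
   Context: $w:[0,1]^2\to[0,1]$ is symmetric and measurable; $U_1,U_2,\dots$ are i.i.d. $\mathrm{Uniform}[0,1]$. $H$ is a non-empty simple graph on the vertex set $\{1,\dots,m\}$; $E(\cdot)$ denotes the edge set of a graph; for a finite set $S$, $\mathcal G_H(S)$ is the collection of all subgraphs of the complete graph on $S$ that are isomorphic to $H$. For $r\in[m]$ and $n\ge m$, $\sigma^2_{m,n;r}:=\binom mr\binom nm\binom{n-r}{m-r}\,\mathrm{Var}\,\mathbb E\Big[\sum_{H'\in\mathcal G_H(\{1,\dots,m\})}\prod_{(s,t)\in E(H')}w(U_s,U_t)\,\Big|\,U_1,\dots,U_r\Big]$, and $\rho_{m,n;1}:=\sum_{r=2}^m\sigma^2_{m,n;r}/\sigma^2_{m,n;1}$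 with the convention $a/0:=+\infty$ for $a\ge0$. *)

theory Defs
  imports "HOL-Probability.Probability" "HOL-Library.Landau_Symbols"
begin

definition unifM :: "real measure" where
  "unifM = restrict_space lborel {0..1}"

definition unifPi :: "nat set \<Rightarrow> (nat \<Rightarrow> real) measure" where
  "unifPi I = PiM I (\<lambda>_. unifM)"

text \<open>Conditional expectation of F(U_1,...,U_m) given (U_i)_{i in I}, evaluated at
  U_i = u i (i in I): integrate out the remaining independent coordinates.\<close>
definition condE :: "nat \<Rightarrow> ((nat \<Rightarrow> real) \<Rightarrow> real) \<Rightarrow> nat set \<Rightarrow> (nat \<Rightarrow> real) \<Rightarrow> real" where
  "condE m F I u = (\<integral>v. F (\<lambda>i. if i \<in> I then u i else v i) \<partial>unifPi ({1..m} - I))"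

definition Var :: "'a measure \<Rightarrow> ('a \<Rightarrow> real) \<Rightarrow> real" where
  "Var M X = (\<integral>x. (X x - (\<integral>y. X y \<partial>M))\<^sup>2 \<partial>M)"

text \<open>Graphs on vertex sets of naturals are given by their edge sets (2-element sets).
  Copies of H (a graph on {1..m}) in the complete graph on S.\<close>
definition copiesH :: "nat \<Rightarrow> nat set set \<Rightarrow> nat set \<Rightarrow> nat set set set" where
  "copiesH m H S = {(\<lambda>e. \<sigma> ` e) ` H | \<sigma>. bij_betw \<sigma> {1..m} S}"

definition edgeprod :: "(real \<Rightarrow> real \<Rightarrow> real) \<Rightarrow> nat set set \<Rightarrow> (nat \<Rightarrow> real) \<Rightarrow> real" where
  "edgeprod w E u = (\<Prod>e\<in>E. w (u (Min e)) (u (Max e)))"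

definition kernelH :: "(real \<Rightarrow> real \<Rightarrow> real) \<Rightarrow> nat \<Rightarrow> nat set set \<Rightarrow> (nat \<Rightarrow> real) \<Rightarrow> real" where
  "kernelH w m H u = (\<Sum>H'\<in>copiesH m H {1..m}. edgeprod w H' u)"

definition sigma2 :: "(real \<Rightarrow> real \<Rightarrow> real) \<Rightarrow> nat \<Rightarrow> nat set set \<Rightarrow> nat \<Rightarrow> nat \<Rightarrow> real" where
  "sigma2 w m H n r =
     real (m choose r) * real (n choose m) * real ((n - r) choose (m - r)) *
     Var (unifPi {1..r}) (condE m (kernelH w m H) {1..r})"

definition rho :: "(real \<Rightarrow> real \<Rightarrow> real) \<Rightarrow> nat \<Rightarrow> nat set set \<Rightarrow> nat \<Rightarrow> ereal" where
  "rho w m H n =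
     (if sigma2 w m H n 1 = 0 then \<infinity>
      else ereal ((\<Sum>r=2..m. sigma2 w m H n r) / sigma2 w m H n 1))"

end

theory Submission
  imports Defs "HOL-Combinatorics.Permutations" "HOL-Real_Asymp.Real_Asymp"
begin

text \<open>
  Every \<open>sigma2 w m H n r\<close> is the binomial factor \<open>(m choose r) (n choose m) ((n - r) choose (m - r))\<close>
  times a variance \<open>V r\<close> that does not depend on \<open>n\<close>. This gives the bound \<open>O(n^(2m - r))\<close>,
  and it shows that \<open>sigma2 w m H n 1\<close> vanishes for one \<open>n \<ge> m\<close> iff \<open>V 1 = 0\<close> iff it vanishes
  for all of them. If \<open>V 1 > 0\<close>, the terms with \<open>r \<ge> 2\<close> are \<open>O(1/n)\<close> relative to the term
  \<open>r = 1\<close>, so \<open>rho\<close> stays bounded away from \<open>0\<close> only if \<open>V 1 = 0\<close>.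

  \<open>V 1\<close> is the variance of \<open>g x = E[kernel | U\<^sub>1 = x]\<close>, so it vanishes iff \<open>g\<close> is a.e. constant.
  Write \<open>P\<^sub>i x = E[\<Prod>(s,t)\<in>E(H). w(U\<^sub>s,U\<^sub>t) | U\<^sub>i = x]\<close>. The copies of \<open>H\<close> are its relabellings
  \<open>\<sigma>(H)\<close>, and since \<open>U\<^sub>1, \<dots>, U\<^sub>m\<close> are exchangeable, conditioning \<open>\<sigma>(H)\<close> on \<open>U\<^sub>1\<close> gives
  \<open>P\<^sub>i\<close> with \<open>i = inv \<sigma> 1\<close>. Summing over all permutations \<open>\<sigma>\<close> shows that \<open>g\<close> is a positive
  multiple of \<open>\<Sum>\<^sub>i P\<^sub>i\<close>. A function that is a.e. constant equals its mean, and by Fubini every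
  \<open>P\<^sub>i\<close> has mean \<open>E[\<Prod>(s,t)\<in>E(H). w(U\<^sub>s,U\<^sub>t)]\<close>.
\<close>

section \<open>Variance and almost sure constancy\<close>

lemma Var_nonneg: "0 \<le> Var M f"
  unfolding Var_def by (rule integral_nonneg_AE) simp

lemma Var_distr:
  assumes X: "X \<in> measurable M N" and f: "f \<in> borel_measurable N"
  shows "Var (distr M N X) f = Var M (\<lambda>x. f (X x))"
proof -
  have "(\<lambda>y. (f y - c)\<^sup>2) \<in> borel_measurable N" for c
    using f by measurable
  then show ?thesis
    unfolding Var_def by (simp add: integral_distr[OF X] integral_distr[OF X f])
qed

lemma (in prob_space) integral_eq_const_AE:
  fixes f :: "'a \<Rightarrow> real"
  assumes "f \<in> borel_measurable M" "AE x in M. f x = c"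
  shows "(\<integral>x. f x \<partial>M) = c"
proof -
  have "(\<integral>x. f x \<partial>M) = (\<integral>x. c \<partial>M)"
    using assms by (intro integral_cong_AE) auto
  then show ?thesis by (simp add: prob_space)
qed

lemma (in prob_space) Var_eq_0_iff_AE_const:
  assumes f: "f \<in> borel_measurable M" and bound: "AE x in M. \<bar>f x\<bar> \<le> B"
  shows "Var M f = 0 \<longleftrightarrow> (\<exists>c. AE x in M. f x = c)"
proof
  define \<mu> where "\<mu> = (\<integral>x. f x \<partial>M)"
  assume "Var M f = 0"
  moreover have "integrable M (\<lambda>x. (f x - \<mu>)\<^sup>2)"
  proof (rule integrable_const_bound[where B = "(B + \<bar>\<mu>\<bar>)\<^sup>2"])
    show "AE x in M. norm ((f x - \<mu>)\<^sup>2) \<le> (B + \<bar>\<mu>\<bar>)\<^sup>2"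
      using bound by eventually_elim (simp add: abs_le_square_iff[symmetric] abs_le_iff, linarith)
  qed (use f in measurable)
  ultimately have "AE x in M. (f x - \<mu>)\<^sup>2 = 0"
    by (simp add: Var_def \<mu>_def integral_nonneg_eq_0_iff_AE)
  then show "\<exists>c. AE x in M. f x = c"
    by (auto elim!: AE_mp)
next
  assume "\<exists>c. AE x in M. f x = c"
  then obtain c where c: "AE x in M. f x = c" by blast
  then have "(\<integral>x. f x \<partial>M) = c"
    using f by (intro integral_eq_const_AE)
  moreover have "AE x in M. (f x - c)\<^sup>2 = 0"
    using c by eventually_elim simp
  ultimately show "Var M f = 0"
    unfolding Var_def by (simp add: integral_eq_zero_AE)
qed

lemma (in prob_space) AE_const_iff_AE_eq_integral:
  fixes f :: "'a \<Rightarrow> real"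
  assumes "integrable M f"
  shows "(\<exists>c. AE x in M. f x = c) \<longleftrightarrow> (AE x in M. f x = (\<integral>x. f x \<partial>M))"
proof
  assume "\<exists>c. AE x in M. f x = c"
  then obtain c where c: "AE x in M. f x = c" by blast
  then have "(\<integral>x. f x \<partial>M) = c"
    using assms by (intro integral_eq_const_AE) auto
  with c show "AE x in M. f x = (\<integral>x. f x \<partial>M)" by simp
qed blast

lemma AE_const_iff_AE_const_mult:
  fixes f :: "'a \<Rightarrow> real"
  assumes "a \<noteq> 0"
  shows "(\<exists>c. AE x in M. a * f x = c) \<longleftrightarrow> (\<exists>c. AE x in M. f x = c)"
proof
  assume "\<exists>c. AE x in M. a * f x = c"
  then obtain c where "AE x in M. a * f x = c" by blast
  then have "AE x in M. f x = c / a"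
    by eventually_elim (use assms in \<open>simp add: field_simps\<close>)
  then show "\<exists>c. AE x in M. f x = c" by blast
next
  assume "\<exists>c. AE x in M. f x = c"
  then obtain c where "AE x in M. f x = c" by blast
  then have "AE x in M. a * f x = a * c"
    by eventually_elim simp
  then show "\<exists>c. AE x in M. a * f x = c" by blast
qed

section \<open>Conditioning on one coordinate of a uniform product\<close>

lemma prob_space_unifM: "prob_space unifM"
  unfolding unifM_def
  by (rule prob_spaceI) (simp add: emeasure_restrict_space space_restrict_space)

lemma space_unifM [simp]: "space unifM = {0..1}"
  by (simp add: unifM_def space_restrict_space)

lemma prob_space_unifPi: "prob_space (unifPi I)"
  unfolding unifPi_def by (rule prob_space_PiM) (simp add: prob_space_unifM)

lemma space_unifPi [simp]: "space (unifPi I) = I \<rightarrow>\<^sub>E {0..1}"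
  by (simp add: unifPi_def space_PiM)

lemma condE_cong:
  assumes "\<And>i. i \<in> I \<Longrightarrow> u i = u' i"
  shows "condE m F I u = condE m F I u'"
  unfolding condE_def using assms by (simp cong: if_cong)

lemma condE_singleton:
  "condE m F {j} (\<lambda>_. x) = (\<integral>v. F (v(j := x)) \<partial>unifPi ({1..m} - {j}))"
  unfolding condE_def by (simp add: fun_upd_def)

lemma measurable_fun_upd_unifPi:
  assumes "j \<in> {1..m}"
  shows "(\<lambda>(x, v). v(j := x)) \<in> measurable (unifM \<Otimes>\<^sub>M unifPi ({1..m} - {j})) (unifPi {1..m})"
proof -
  have "insert j ({1..m} - {j}) = {1..m}" using assms by auto
  then have "(\<lambda>(v, x). v(j := x)) \<in> measurable (unifPi ({1..m} - {j}) \<Otimes>\<^sub>M unifM) (unifPi {1..m})"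
    using measurable_add_dim[of j "{1..m} - {j}" "\<lambda>_. unifM"] by (simp add: unifPi_def)
  from measurable_pair_swap_iff[THEN iffD1, OF this] show ?thesis
    by simp
qed

lemma measurable_fun_upd_unifPi_at:
  assumes "j \<in> {1..m}" "x \<in> {0..1}"
  shows "(\<lambda>v. v(j := x)) \<in> measurable (unifPi ({1..m} - {j})) (unifPi {1..m})"
  using measurable_comp[OF measurable_Pair1'[of x unifM] measurable_fun_upd_unifPi[OF assms(1)]] assms(2)
  by (simp add: comp_def)

lemma measurable_section_unifPi:
  assumes "F \<in> borel_measurable (unifPi {1..m})" "j \<in> {1..m}"
  shows "(\<lambda>(x, v). F (v(j := x))) \<in> borel_measurable (unifM \<Otimes>\<^sub>M unifPi ({1..m} - {j}))"
  using measurable_comp[OF measurable_fun_upd_unifPi assms(1)] assms(2)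
  by (simp add: comp_def prod.case_distrib)

lemma fun_upd_in_space_unifPi:
  assumes "v \<in> space (unifPi ({1..m} - {j}))" "j \<in> {1..m}" "x \<in> {0..1}"
  shows "v(j := x) \<in> space (unifPi {1..m})"
  using assms by (auto simp: PiE_iff extensional_def)

context
  fixes m j :: nat and F :: "(nat \<Rightarrow> real) \<Rightarrow> real" and B :: real
  assumes F: "F \<in> borel_measurable (unifPi {1..m})"
    and F_bound: "\<And>u. u \<in> space (unifPi {1..m}) \<Longrightarrow> \<bar>F u\<bar> \<le> B"
    and j: "j \<in> {1..m}"
begin

lemma integrable_condE_section:
  assumes x: "x \<in> {0..1}"
  shows "integrable (unifPi ({1..m} - {j})) (\<lambda>v. F (v(j := x)))"
proof -
  interpret prob_space "unifPi ({1..m} - {j})" by (rule prob_space_unifPi)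
  have "(\<lambda>v. F (v(j := x))) \<in> borel_measurable (unifPi ({1..m} - {j}))"
    using measurable_comp[OF measurable_fun_upd_unifPi_at[OF j x] F] by (simp add: comp_def)
  then show ?thesis
    by (intro integrable_const_bound[where B = B])
      (auto intro!: AE_I2 F_bound fun_upd_in_space_unifPi j x)
qed

lemma measurable_condE_singleton: "(\<lambda>x. condE m F {j} (\<lambda>_. x)) \<in> borel_measurable unifM"
proof -
  interpret prob_space "unifPi ({1..m} - {j})" by (rule prob_space_unifPi)
  show ?thesis
    unfolding condE_singleton
    by (rule borel_measurable_lebesgue_integral) (rule measurable_section_unifPi[OF F j])
qed

lemma abs_condE_singleton_le:
  assumes x: "x \<in> {0..1}"
  shows "\<bar>condE m F {j} (\<lambda>_. x)\<bar> \<le> B"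
proof -
  interpret prob_space "unifPi ({1..m} - {j})" by (rule prob_space_unifPi)
  have "\<bar>condE m F {j} (\<lambda>_. x)\<bar> \<le> (\<integral>v. \<bar>F (v(j := x))\<bar> \<partial>unifPi ({1..m} - {j}))"
    unfolding condE_singleton by (rule integral_abs_bound)
  also have "\<dots> \<le> B"
    using integrable_condE_section[OF x]
    by (intro integral_le_const) (auto intro!: AE_I2 F_bound fun_upd_in_space_unifPi j x)
  finally show ?thesis .
qed

lemma integrable_condE_singleton: "integrable unifM (\<lambda>x. condE m F {j} (\<lambda>_. x))"
proof -
  interpret prob_space unifM by (rule prob_space_unifM)
  show ?thesis
    by (rule integrable_const_bound[where B = B])
      (auto intro!: AE_I2 abs_condE_singleton_le measurable_condE_singleton)
qed

lemma integral_condE_singleton: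
  "(\<integral>x. condE m F {j} (\<lambda>_. x) \<partial>unifM) = (\<integral>u. F u \<partial>unifPi {1..m})"
proof -
  let ?J = "{1..m} - {j}"
  interpret pair_prob_space unifM "unifPi ?J"
    by (intro pair_prob_space.intro pair_sigma_finite.intro prob_space_imp_sigma_finite
        prob_space_unifM prob_space_unifPi)
  have ins: "insert j ?J = {1..m}" using j by auto
  have "distr (unifM \<Otimes>\<^sub>M unifPi ?J) (unifPi {1..m}) (\<lambda>(x, v). v(j := x)) = unifPi {1..m}"
    using distr_pair_PiM_eq_PiM[of ?J "\<lambda>_. unifM" j] ins by (simp add: unifPi_def prob_space_unifM)
  then have "(\<integral>u. F u \<partial>unifPi {1..m}) = (\<integral>p. (\<lambda>(x, v). F (v(j := x))) p \<partial>(unifM \<Otimes>\<^sub>M unifPi ?J))"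
    using integral_distr[OF measurable_fun_upd_unifPi[OF j] F] by (simp add: prod.case_distrib)
  also have "\<dots> = (\<integral>x. (\<integral>v. F (v(j := x)) \<partial>unifPi ?J) \<partial>unifM)"
  proof -
    have "integrable (unifM \<Otimes>\<^sub>M unifPi ?J) (\<lambda>(x, v). F (v(j := x)))"
      using measurable_section_unifPi[OF F j]
      by (intro P.integrable_const_bound[where B = B])
        (auto intro!: AE_I2 F_bound fun_upd_in_space_unifPi j simp: space_pair_measure)
    from integral_fst'[OF this] show ?thesis by simp
  qed
  finally show ?thesis
    by (simp add: condE_singleton)
qed

end

lemma fun_upd_comp_permutes:
  assumes \<sigma>: "\<sigma> permutes S" and j: "j \<in> S" and v: "v \<in> extensional (S - {\<sigma> j})"
  shows "(v(\<sigma> j := x)) \<circ> \<sigma> = (\<lambda>n\<in>S - {j}. v (\<sigma> n))(j := x)"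
proof
  fix i
  consider "i = j" | "i \<in> S - {j}" | "i \<notin> S"
    by blast
  then show "((v(\<sigma> j := x)) \<circ> \<sigma>) i = ((\<lambda>n\<in>S - {j}. v (\<sigma> n))(j := x)) i"
  proof cases
    case 2
    then have "\<sigma> i \<noteq> \<sigma> j" "i \<noteq> j"
      using permutes_inj[OF \<sigma>] by (auto dest: injD)
    then show ?thesis using 2 by simp
  next
    case 3
    then have "\<sigma> i = i" "i \<noteq> j" "i \<noteq> \<sigma> j"
      using permutes_not_in[OF \<sigma>] permutes_in_image[OF \<sigma>] j by auto
    moreover have "v i = undefined"
      using v 3 by (auto simp: extensional_def)
    ultimately show ?thesis
      using 3 by simp
  qed simp
qed

lemma condE_permute:
  assumes \<sigma>: "\<sigma> permutes {1..m}" and j: "j \<in> {1..m}" and x: "x \<in> {0..1}"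
    and F: "F \<in> borel_measurable (unifPi {1..m})"
  shows "condE m (\<lambda>u. F (u \<circ> \<sigma>)) {\<sigma> j} (\<lambda>_. x) = condE m F {j} (\<lambda>_. x)"
proof -
  define I where "I = {1..m} - {j}"
  define K where "K = {1..m} - {\<sigma> j}"
  define R where "R v = (\<lambda>n\<in>I. v (\<sigma> n))" for v :: "nat \<Rightarrow> real"
  have \<sigma>_I: "\<sigma> \<in> I \<rightarrow> K"
    using permutes_in_image[OF \<sigma>] permutes_inj[OF \<sigma>] by (auto simp: I_def K_def dest: injD)
  have R: "R \<in> measurable (unifPi K) (unifPi I)"
    unfolding R_def unifPi_def
    by (intro measurable_restrict measurable_component_singleton) (use \<sigma>_I in auto)
  have distr_R: "distr (unifPi K) (unifPi I) R = unifPi I"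
    using distr_PiM_reindex[of K "\<lambda>_. unifM" \<sigma> I] \<sigma>_I permutes_inj_on[OF \<sigma>] prob_space_unifM
    unfolding R_def unifPi_def by simp
  have upd: "(v(\<sigma> j := x)) \<circ> \<sigma> = (R v)(j := x)" if "v \<in> space (unifPi K)" for v
    using fun_upd_comp_permutes[OF \<sigma> j, of v] that unfolding R_def I_def K_def by (simp add: PiE_def)
  have "condE m (\<lambda>u. F (u \<circ> \<sigma>)) {\<sigma> j} (\<lambda>_. x) = (\<integral>v. F ((R v)(j := x)) \<partial>unifPi K)"
    unfolding condE_singleton K_def[symmetric] by (intro Bochner_Integration.integral_cong) (simp_all add: upd)
  also have "\<dots> = (\<integral>v. F (v(j := x)) \<partial>distr (unifPi K) (unifPi I) R)"
    using measurable_comp[OF measurable_fun_upd_unifPi_at[OF j x] F]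
    by (intro integral_distr[symmetric] R) (simp add: comp_def I_def)
  also have "\<dots> = condE m F {j} (\<lambda>_. x)"
    unfolding condE_singleton I_def[symmetric] distr_R ..
  finally show ?thesis .
qed

section \<open>Permutations and copies of a graph\<close>

lemma inj_comp_left_permutes:
  assumes "\<sigma> permutes S"
  shows "inj (\<lambda>\<rho>. \<sigma> \<circ> \<rho>)"
proof (rule inj_onI)
  fix \<rho> \<tau> assume "\<sigma> \<circ> \<rho> = \<sigma> \<circ> \<tau>"
  then show "\<rho> = \<tau>"
    using permutes_inj[OF assms] by (auto simp: fun_eq_iff dest: injD)
qed

lemma card_permutes_apply_eq:
  assumes a: "a \<in> S" and b: "b \<in> S"
  shows "card {\<sigma>. \<sigma> permutes S \<and> \<sigma> a = b} = card {\<sigma>. \<sigma> permutes S \<and> \<sigma> a = a}"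
proof -
  let ?t = "Transposition.transpose a b"
  have t: "?t permutes S"
    by (rule permutes_swap_id[OF a b])
  have "{\<sigma>. \<sigma> permutes S \<and> \<sigma> a = b} = (\<lambda>\<rho>. ?t \<circ> \<rho>) ` {\<sigma>. \<sigma> permutes S \<and> \<sigma> a = a}"
  proof (intro equalityI subsetI)
    fix \<tau> assume "\<tau> \<in> {\<sigma>. \<sigma> permutes S \<and> \<sigma> a = b}"
    then have \<tau>: "\<tau> permutes S" "\<tau> a = b" by auto
    have "?t \<circ> \<tau> permutes S" "(?t \<circ> \<tau>) a = a"
      using permutes_compose[OF \<tau>(1) t] \<tau>(2) by simp_all
    moreover have "\<tau> = ?t \<circ> (?t \<circ> \<tau>)"
      by (simp add: o_assoc)
    ultimately show "\<tau> \<in> (\<lambda>\<rho>. ?t \<circ> \<rho>) ` {\<sigma>. \<sigma> permutes S \<and> \<sigma> a = a}"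
      by blast
  next
    fix \<tau> assume "\<tau> \<in> (\<lambda>\<rho>. ?t \<circ> \<rho>) ` {\<sigma>. \<sigma> permutes S \<and> \<sigma> a = a}"
    then obtain \<rho> where "\<rho> permutes S" "\<rho> a = a" "\<tau> = ?t \<circ> \<rho>" by blast
    then show "\<tau> \<in> {\<sigma>. \<sigma> permutes S \<and> \<sigma> a = b}"
      using permutes_compose[OF _ t] by simp
  qed
  then show ?thesis
    using card_image[OF inj_on_subset[OF inj_comp_left_permutes[OF t] subset_UNIV]] by simp
qed

lemma sum_permutes_apply:
  fixes g :: "'a \<Rightarrow> 'b::comm_semiring_1"
  assumes S: "finite S" and a: "a \<in> S"
  shows "(\<Sum>\<sigma> | \<sigma> permutes S. g (\<sigma> a))
    = of_nat (card {\<sigma>. \<sigma> permutes S \<and> \<sigma> a = a}) * (\<Sum>i\<in>S. g i)"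
proof -
  let ?P = "{\<sigma>. \<sigma> permutes S}"
  have "(\<Sum>\<sigma>\<in>?P. g (\<sigma> a)) = (\<Sum>i\<in>S. \<Sum>\<sigma>\<in>{\<sigma> \<in> ?P. \<sigma> a = i}. g (\<sigma> a))"
    using S a permutes_in_image[of _ S a] by (intro sum.group[symmetric]) (auto intro: finite_permutations)
  also have "\<dots> = (\<Sum>i\<in>S. of_nat (card {\<sigma>. \<sigma> permutes S \<and> \<sigma> a = a}) * g i)"
  proof (rule sum.cong[OF refl])
    fix i assume i: "i \<in> S"
    have "(\<Sum>\<sigma>\<in>{\<sigma> \<in> ?P. \<sigma> a = i}. g (\<sigma> a)) = (\<Sum>\<sigma>\<in>{\<sigma> \<in> ?P. \<sigma> a = i}. g i)"
      by (rule sum.cong) auto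
    then show "(\<Sum>\<sigma>\<in>{\<sigma> \<in> ?P. \<sigma> a = i}. g (\<sigma> a))
        = of_nat (card {\<sigma>. \<sigma> permutes S \<and> \<sigma> a = a}) * g i"
      using card_permutes_apply_eq[OF a i] by simp
  qed
  finally show ?thesis
    by (simp add: sum_distrib_left)
qed

definition relabel :: "(nat \<Rightarrow> nat) \<Rightarrow> nat set set \<Rightarrow> nat set set" where
  "relabel \<sigma> E = (\<lambda>e. \<sigma> ` e) ` E"

definition graph_on :: "nat \<Rightarrow> nat set set \<Rightarrow> bool" where
  "graph_on m E \<longleftrightarrow> E \<subseteq> {e. e \<subseteq> {1..m} \<and> card e = 2}"

definition automorphisms :: "nat \<Rightarrow> nat set set \<Rightarrow> (nat \<Rightarrow> nat) set" where
  "automorphisms m E = {\<sigma>. \<sigma> permutes {1..m} \<and> relabel \<sigma> E = E}"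

lemma relabel_comp: "relabel (\<sigma> \<circ> \<tau>) E = relabel \<sigma> (relabel \<tau> E)"
  by (simp add: relabel_def image_image image_comp)

lemma relabel_id [simp]: "relabel id E = E"
  by (simp add: relabel_def)

lemma doubleton_Min_Max:
  fixes e :: "'a::linorder set"
  assumes "card e = 2"
  shows "e = {Min e, Max e}"
proof -
  obtain a b where "e = {a, b}"
    using assms by (auto simp: card_2_iff)
  then show ?thesis
    by (cases "a \<le> b") (auto simp: min_def max_def)
qed

lemma graph_on_Min_Max:
  assumes "graph_on m E" "e \<in> E"
  shows "Min e \<in> {1..m}" "Max e \<in> {1..m}"
  using assms doubleton_Min_Max[of e] unfolding graph_on_def by blast+

lemma graph_on_relabel:
  assumes E: "graph_on m E" and \<sigma>: "\<sigma> permutes {1..m}"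
  shows "graph_on m (relabel \<sigma> E)"
  using E permutes_image[OF \<sigma>] card_image[OF permutes_inj_on[OF \<sigma>]]
  by (fastforce simp: graph_on_def relabel_def)

lemma copiesH_eq_relabel:
  assumes H: "graph_on m H"
  shows "copiesH m H {1..m} = (\<lambda>\<sigma>. relabel \<sigma> H) ` {\<sigma>. \<sigma> permutes {1..m}}"
proof
  show "copiesH m H {1..m} \<subseteq> (\<lambda>\<sigma>. relabel \<sigma> H) ` {\<sigma>. \<sigma> permutes {1..m}}"
  proof
    fix H' assume "H' \<in> copiesH m H {1..m}"
    then obtain \<sigma> where H': "H' = (\<lambda>e. \<sigma> ` e) ` H" and bij: "bij_betw \<sigma> {1..m} {1..m}"
      by (auto simp: copiesH_def)
    define \<sigma>' where "\<sigma>' i = (if i \<in> {1..m} then \<sigma> i else i)" for i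
    have "bij_betw \<sigma>' {1..m} {1..m}"
      using bij by (rule bij_betw_cong[THEN iffD1, rotated]) (simp add: \<sigma>'_def)
    then have "\<sigma>' permutes {1..m}"
      by (rule bij_imp_permutes) (auto simp: \<sigma>'_def)
    moreover have "H' = relabel \<sigma>' H"
      using H unfolding H' relabel_def graph_on_def
      by (intro image_cong refl) (auto simp: \<sigma>'_def subset_iff intro!: image_cong)
    ultimately show "H' \<in> (\<lambda>\<sigma>. relabel \<sigma> H) ` {\<sigma>. \<sigma> permutes {1..m}}" by blast
  qed
next
  show "(\<lambda>\<sigma>. relabel \<sigma> H) ` {\<sigma>. \<sigma> permutes {1..m}} \<subseteq> copiesH m H {1..m}"
    unfolding copiesH_def relabel_def by (auto intro: permutes_imp_bij)
qed

lemma graph_on_copiesH: "graph_on m H \<Longrightarrow> H' \<in> copiesH m H {1..m} \<Longrightarrow> graph_on m H'"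
  unfolding copiesH_eq_relabel by (auto intro: graph_on_relabel)

lemma card_automorphisms_pos: "0 < card (automorphisms m E)"
proof -
  have "finite (automorphisms m E)"
    by (rule finite_subset[OF _ finite_permutations[of "{1..m}"]]) (auto simp: automorphisms_def)
  moreover have "id \<in> automorphisms m E"
    by (simp add: automorphisms_def)
  ultimately show ?thesis
    by (auto simp: card_gt_0_iff)
qed

lemma card_relabel_fibre:
  assumes \<sigma>: "\<sigma> permutes {1..m}"
  shows "card {\<tau>. \<tau> permutes {1..m} \<and> relabel \<tau> E = relabel \<sigma> E} = card (automorphisms m E)"
proof -
  have "{\<tau>. \<tau> permutes {1..m} \<and> relabel \<tau> E = relabel \<sigma> E} = (\<lambda>\<rho>. \<sigma> \<circ> \<rho>) ` automorphisms m E"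
  proof (intro equalityI subsetI)
    fix \<tau> assume "\<tau> \<in> {\<tau>. \<tau> permutes {1..m} \<and> relabel \<tau> E = relabel \<sigma> E}"
    then have \<tau>: "\<tau> permutes {1..m}" "relabel \<tau> E = relabel \<sigma> E" by auto
    have "relabel (inv \<sigma> \<circ> \<tau>) E = relabel (inv \<sigma> \<circ> \<sigma>) E"
      by (simp only: relabel_comp \<tau>(2))
    then have "relabel (inv \<sigma> \<circ> \<tau>) E = E"
      by (simp add: permutes_inv_o(2)[OF \<sigma>])
    moreover have "inv \<sigma> \<circ> \<tau> permutes {1..m}"
      using \<tau>(1) \<sigma> by (simp add: permutes_compose permutes_inv)
    moreover have "\<tau> = \<sigma> \<circ> (inv \<sigma> \<circ> \<tau>)"
      by (simp add: o_assoc permutes_inv_o(1)[OF \<sigma>])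
    ultimately show "\<tau> \<in> (\<lambda>\<rho>. \<sigma> \<circ> \<rho>) ` automorphisms m E"
      by (auto simp: automorphisms_def)
  qed (use \<sigma> in \<open>auto simp: automorphisms_def relabel_comp intro: permutes_compose\<close>)
  then show ?thesis
    using card_image[OF inj_on_subset[OF inj_comp_left_permutes[OF \<sigma>] subset_UNIV]] by simp
qed

lemma sum_copiesH_mult_card_automorphisms:
  fixes F :: "nat set set \<Rightarrow> 'a::comm_semiring_1"
  assumes H: "graph_on m H"
  shows "(\<Sum>H'\<in>copiesH m H {1..m}. F H') * of_nat (card (automorphisms m H))
    = (\<Sum>\<sigma> | \<sigma> permutes {1..m}. F (relabel \<sigma> H))"
proof -
  let ?P = "{\<sigma>. \<sigma> permutes {1..m}}"
  have "(\<Sum>\<sigma>\<in>?P. F (relabel \<sigma> H))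
      = (\<Sum>H'\<in>(\<lambda>\<sigma>. relabel \<sigma> H) ` ?P. \<Sum>\<sigma>\<in>{\<sigma> \<in> ?P. relabel \<sigma> H = H'}. F (relabel \<sigma> H))"
    by (rule sum.group[symmetric]) (auto intro: finite_permutations)
  also have "\<dots> = (\<Sum>H'\<in>(\<lambda>\<sigma>. relabel \<sigma> H) ` ?P. F H' * of_nat (card (automorphisms m H)))"
  proof (rule sum.cong[OF refl])
    fix H' assume "H' \<in> (\<lambda>\<sigma>. relabel \<sigma> H) ` ?P"
    then obtain \<sigma> where \<sigma>: "\<sigma> permutes {1..m}" "H' = relabel \<sigma> H" by auto
    have "(\<Sum>\<tau>\<in>{\<tau> \<in> ?P. relabel \<tau> H = H'}. F (relabel \<tau> H))
        = (\<Sum>\<tau>\<in>{\<tau> \<in> ?P. relabel \<tau> H = H'}. F H')"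
      by (rule sum.cong) auto
    also have "\<dots> = F H' * of_nat (card (automorphisms m H))"
      using card_relabel_fibre[OF \<sigma>(1), of H] \<sigma>(2) by (simp add: mult.commute)
    finally show "(\<Sum>\<tau>\<in>{\<tau> \<in> ?P. relabel \<tau> H = H'}. F (relabel \<tau> H))
        = F H' * of_nat (card (automorphisms m H))" .
  qed
  also have "\<dots> = (\<Sum>H'\<in>copiesH m H {1..m}. F H') * of_nat (card (automorphisms m H))"
    by (simp only: copiesH_eq_relabel[OF H] sum_distrib_right)
  finally show ?thesis ..
qed

section \<open>The conditional kernel of a graphon\<close>

locale graphon =
  fixes w :: "real \<Rightarrow> real \<Rightarrow> real"
  assumes measurable_w: "(\<lambda>(x, y). w x y) \<in> borel_measurable (unifM \<Otimes>\<^sub>M unifM)"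
    and w_sym: "\<And>x y. x \<in> {0..1} \<Longrightarrow> y \<in> {0..1} \<Longrightarrow> w x y = w y x"
    and w_range: "\<And>x y. x \<in> {0..1} \<Longrightarrow> y \<in> {0..1} \<Longrightarrow> 0 \<le> w x y \<and> w x y \<le> 1"
begin

lemma w_Min_Max:
  assumes "u a \<in> {0..1}" "u b \<in> {0..1}"
  shows "w (u (Min {a, b})) (u (Max {a, b})) = w (u a) (u b)"
  using w_sym[OF assms] by (cases "a \<le> b") (auto simp: min_def max_def)

lemma edgeprod_measurable:
  assumes E: "graph_on m E"
  shows "edgeprod w E \<in> borel_measurable (unifPi {1..m})"
  unfolding edgeprod_def
proof (rule borel_measurable_prod)
  fix e assume "e \<in> E"
  then have "(\<lambda>u. (u (Min e), u (Max e))) \<in> measurable (unifPi {1..m}) (unifM \<Otimes>\<^sub>M unifM)"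
    using graph_on_Min_Max[OF E] unfolding unifPi_def
    by (intro measurable_Pair measurable_component_singleton) auto
  from measurable_comp[OF this measurable_w]
  show "(\<lambda>u. w (u (Min e)) (u (Max e))) \<in> borel_measurable (unifPi {1..m})"
    by (simp add: comp_def)
qed

lemma abs_edgeprod_le_1:
  assumes E: "graph_on m E" and u: "\<And>k. k \<in> {1..m} \<Longrightarrow> u k \<in> {0..1}"
  shows "\<bar>edgeprod w E u\<bar> \<le> 1"
proof -
  have "0 \<le> w (u (Min e)) (u (Max e)) \<and> w (u (Min e)) (u (Max e)) \<le> 1" if "e \<in> E" for e
    using w_range u graph_on_Min_Max[OF E that] by blast
  then show ?thesis
    unfolding edgeprod_def abs_prod by (intro prod_le_1) auto
qed

lemma edgeprod_relabel:
  assumes E: "graph_on m E" and \<sigma>: "\<sigma> permutes {1..m}"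
    and u: "\<And>k. k \<in> {1..m} \<Longrightarrow> u k \<in> {0..1}"
  shows "edgeprod w (relabel \<sigma> E) u = edgeprod w E (u \<circ> \<sigma>)"
proof -
  have "inj_on (\<lambda>e. \<sigma> ` e) E"
    using inj_image_eq_iff[OF permutes_inj[OF \<sigma>]] by (auto intro: inj_onI)
  then have "edgeprod w (relabel \<sigma> E) u = (\<Prod>e\<in>E. w (u (Min (\<sigma> ` e))) (u (Max (\<sigma> ` e))))"
    by (simp add: edgeprod_def relabel_def prod.reindex)
  also have "\<dots> = edgeprod w E (u \<circ> \<sigma>)"
    unfolding edgeprod_def
  proof (rule prod.cong[OF refl])
    fix e assume e: "e \<in> E"
    then have "card e = 2"
      using E by (auto simp: graph_on_def)
    from arg_cong[OF doubleton_Min_Max[OF this], of "image \<sigma>"]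
    have "\<sigma> ` e = {\<sigma> (Min e), \<sigma> (Max e)}"
      by (simp only: image_insert image_empty)
    moreover have "u (\<sigma> (Min e)) \<in> {0..1}" "u (\<sigma> (Max e)) \<in> {0..1}"
      using u permutes_in_image[OF \<sigma>] graph_on_Min_Max[OF E e] by auto
    ultimately show "w (u (Min (\<sigma> ` e))) (u (Max (\<sigma> ` e)))
        = w ((u \<circ> \<sigma>) (Min e)) ((u \<circ> \<sigma>) (Max e))"
      by (simp only: w_Min_Max comp_apply)
  qed
  finally show ?thesis .
qed

lemma condE_edgeprod_relabel:
  assumes E: "graph_on m E" and \<sigma>: "\<sigma> permutes {1..m}" and j: "j \<in> {1..m}" and x: "x \<in> {0..1}"
  shows "condE m (edgeprod w (relabel \<sigma> E)) {\<sigma> j} (\<lambda>_. x) = condE m (edgeprod w E) {j} (\<lambda>_. x)"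
proof -
  have \<sigma>j: "\<sigma> j \<in> {1..m}"
    using permutes_in_image[OF \<sigma>] j by simp
  have "condE m (edgeprod w (relabel \<sigma> E)) {\<sigma> j} (\<lambda>_. x)
      = condE m (\<lambda>u. edgeprod w E (u \<circ> \<sigma>)) {\<sigma> j} (\<lambda>_. x)"
    unfolding condE_singleton
    using fun_upd_in_space_unifPi[OF _ \<sigma>j x]
    by (intro Bochner_Integration.integral_cong refl edgeprod_relabel[OF E \<sigma>]) (auto simp: PiE_iff)
  also have "\<dots> = condE m (edgeprod w E) {j} (\<lambda>_. x)"
    by (rule condE_permute[OF \<sigma> j x edgeprod_measurable[OF E]])
  finally show ?thesis .
qed

lemma kernelH_measurable:
  assumes H: "graph_on m H"
  shows "kernelH w m H \<in> borel_measurable (unifPi {1..m})"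
  unfolding kernelH_def
  using edgeprod_measurable[OF graph_on_copiesH[OF H]] by measurable

lemma abs_kernelH_le:
  assumes H: "graph_on m H" and u: "u \<in> space (unifPi {1..m})"
  shows "\<bar>kernelH w m H u\<bar> \<le> card (copiesH m H {1..m})"
proof -
  have "\<bar>kernelH w m H u\<bar> \<le> (\<Sum>H'\<in>copiesH m H {1..m}. \<bar>edgeprod w H' u\<bar>)"
    unfolding kernelH_def by (rule sum_abs)
  also have "\<dots> \<le> (\<Sum>H'\<in>copiesH m H {1..m}. 1)"
    using u by (intro sum_mono abs_edgeprod_le_1[OF graph_on_copiesH[OF H]]) (auto simp: PiE_iff)
  finally show ?thesis by simp
qed

lemma condE_kernelH_mult_card_automorphisms:
  assumes H: "graph_on m H" and m: "1 \<le> m" and x: "x \<in> {0..1}"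
  shows "condE m (kernelH w m H) {1} (\<lambda>_. x) * card (automorphisms m H)
    = card {\<sigma>. \<sigma> permutes {1..m} \<and> \<sigma> 1 = 1} * (\<Sum>i=1..m. condE m (edgeprod w H) {i} (\<lambda>_. x))"
proof -
  let ?G = "\<lambda>i. condE m (edgeprod w H) {i} (\<lambda>_. x)"
  have one: "1 \<in> {1..m}" using m by simp
  have "condE m (kernelH w m H) {1} (\<lambda>_. x)
      = (\<Sum>H'\<in>copiesH m H {1..m}. condE m (edgeprod w H') {1} (\<lambda>_. x))"
    unfolding condE_singleton kernelH_def
  proof (rule Bochner_Integration.integral_sum)
    fix H' assume "H' \<in> copiesH m H {1..m}"
    then have H': "graph_on m H'" by (rule graph_on_copiesH[OF H])
    show "integrable (unifPi ({1..m} - {1})) (\<lambda>v. edgeprod w H' (v(1 := x)))"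
      by (rule integrable_condE_section[OF edgeprod_measurable[OF H'] _ one x])
        (auto intro: abs_edgeprod_le_1[OF H'] simp: PiE_iff)
  qed
  then have "condE m (kernelH w m H) {1} (\<lambda>_. x) * card (automorphisms m H)
      = (\<Sum>\<sigma> | \<sigma> permutes {1..m}. condE m (edgeprod w (relabel \<sigma> H)) {1} (\<lambda>_. x))"
    using sum_copiesH_mult_card_automorphisms[OF H] by simp
  also have "\<dots> = (\<Sum>\<sigma> | \<sigma> permutes {1..m}. ?G (inv \<sigma> 1))"
  proof (rule sum.cong[OF refl])
    fix \<sigma> assume "\<sigma> \<in> {\<sigma>. \<sigma> permutes {1..m}}"
    then have \<sigma>: "\<sigma> permutes {1..m}" by simp
    have "inv \<sigma> 1 \<in> {1..m}"
      using permutes_in_image[OF permutes_inv[OF \<sigma>]] one by simp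
    from condE_edgeprod_relabel[OF H \<sigma> this x]
    show "condE m (edgeprod w (relabel \<sigma> H)) {1} (\<lambda>_. x) = ?G (inv \<sigma> 1)"
      by (simp add: permutes_inverses(1)[OF \<sigma>])
  qed
  also have "\<dots> = (\<Sum>\<sigma> | \<sigma> permutes {1..m}. ?G (\<sigma> 1))"
    by (rule sum_permutations_inverse[symmetric])
  also have "\<dots> = card {\<sigma>. \<sigma> permutes {1..m} \<and> \<sigma> 1 = 1} * (\<Sum>i=1..m. ?G i)"
    by (rule sum_permutes_apply[OF _ one]) simp
  finally show ?thesis .
qed

lemma integral_mean_condE_edgeprod:
  assumes H: "graph_on m H" and m: "1 \<le> m"
  shows "(\<integral>x. (1 / real m) * (\<Sum>i=1..m. condE m (edgeprod w H) {i} (\<lambda>_. x)) \<partial>unifM)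
    = (\<integral>u. edgeprod w H u \<partial>unifPi {1..m})"
proof -
  have bound: "\<And>u. u \<in> space (unifPi {1..m}) \<Longrightarrow> \<bar>edgeprod w H u\<bar> \<le> 1"
    by (rule abs_edgeprod_le_1[OF H]) (auto simp: PiE_iff)
  have "(\<integral>x. (\<Sum>i=1..m. condE m (edgeprod w H) {i} (\<lambda>_. x)) \<partial>unifM)
      = (\<Sum>i=1..m. \<integral>x. condE m (edgeprod w H) {i} (\<lambda>_. x) \<partial>unifM)"
    by (intro Bochner_Integration.integral_sum integrable_condE_singleton[OF edgeprod_measurable[OF H] bound])
  also have "\<dots> = (\<Sum>i=1..m. \<integral>u. edgeprod w H u \<partial>unifPi {1..m})"
    by (intro sum.cong refl integral_condE_singleton[OF edgeprod_measurable[OF H] bound])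
  finally show ?thesis
    using m by simp
qed

lemma Var_condE_kernelH_eq_0_iff:
  assumes H: "graph_on m H" and m: "1 \<le> m"
  shows "Var (unifPi {1}) (condE m (kernelH w m H) {1}) = 0
    \<longleftrightarrow> (\<exists>c. AE x in unifM. condE m (kernelH w m H) {1} (\<lambda>_. x) = c)"
proof -
  interpret prob_space unifM by (rule prob_space_unifM)
  let ?K = "\<lambda>x. condE m (kernelH w m H) {1} (\<lambda>_. x)"
  have one: "1 \<in> {1..m}" using m by simp
  have K: "?K \<in> borel_measurable unifM"
    by (rule measurable_condE_singleton[OF kernelH_measurable[OF H] abs_kernelH_le[OF H] one])
  have "condE m (kernelH w m H) {1} = (\<lambda>u. ?K (u 1))"
    by (intro ext condE_cong) simp
  moreover have "(\<lambda>u. u 1) \<in> measurable (unifPi {1}) unifM"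
    unfolding unifPi_def by (rule measurable_component_singleton) simp
  moreover have "distr (unifPi {1}) unifM (\<lambda>u. u 1) = unifM"
    using distr_PiM_component[of "{1::nat}" "\<lambda>_. unifM" 1] by (simp add: unifPi_def prob_space_unifM)
  ultimately have "Var (unifPi {1}) (condE m (kernelH w m H) {1}) = Var unifM ?K"
    using Var_distr[of "\<lambda>u. u 1" "unifPi {1}" unifM ?K] K by simp
  also have "\<dots> = 0 \<longleftrightarrow> (\<exists>c. AE x in unifM. ?K x = c)"
    using abs_condE_singleton_le[OF kernelH_measurable[OF H] abs_kernelH_le[OF H] one]
    by (intro Var_eq_0_iff_AE_const[where B = "card (copiesH m H {1..m})"] K AE_I2) simp
  finally show ?thesis .
qed

lemma condE_kernelH_proportional:
  assumes H: "graph_on m H" and m: "1 \<le> m"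
  obtains a :: real where "a > 0"
    and "\<And>x. x \<in> {0..1} \<Longrightarrow> condE m (kernelH w m H) {1} (\<lambda>_. x)
      = a * ((1 / real m) * (\<Sum>i=1..m. condE m (edgeprod w H) {i} (\<lambda>_. x)))"
proof
  define a where "a = real m * card {\<sigma>. \<sigma> permutes {1..m} \<and> \<sigma> 1 = 1} / card (automorphisms m H)"
  have "card {\<sigma>. \<sigma> permutes {1..m} \<and> \<sigma> 1 = 1} \<noteq> 0"
    using finite_permutations[of "{1..m}"] by (auto simp: card_eq_0_iff intro!: exI[of _ id])
  then show "a > 0"
    using m card_automorphisms_pos[of m H] by (simp add: a_def)
  show "condE m (kernelH w m H) {1} (\<lambda>_. x)
      = a * ((1 / real m) * (\<Sum>i=1..m. condE m (edgeprod w H) {i} (\<lambda>_. x)))" if "x \<in> {0..1}" for x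
    using condE_kernelH_mult_card_automorphisms[OF H m that] card_automorphisms_pos[of m H] m
    by (simp add: a_def field_simps)
qed

lemma AE_const_condE_kernelH_iff:
  assumes H: "graph_on m H" and m: "1 \<le> m"
  shows "(\<exists>c. AE x in unifM. condE m (kernelH w m H) {1} (\<lambda>_. x) = c)
    \<longleftrightarrow> (AE x in unifM. (1 / real m) * (\<Sum>i=1..m. condE m (edgeprod w H) {i} (\<lambda>_. x))
          = (\<integral>u. edgeprod w H u \<partial>unifPi {1..m}))"
proof -
  interpret prob_space unifM by (rule prob_space_unifM)
  define S where "S x = (1 / real m) * (\<Sum>i=1..m. condE m (edgeprod w H) {i} (\<lambda>_. x))" for x
  obtain a where a: "a > 0"
    and K: "\<And>x. x \<in> space unifM \<Longrightarrow> condE m (kernelH w m H) {1} (\<lambda>_. x) = a * S x"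
    using condE_kernelH_proportional[OF H m] unfolding S_def space_unifM by blast
  have "\<And>u. u \<in> space (unifPi {1..m}) \<Longrightarrow> \<bar>edgeprod w H u\<bar> \<le> 1"
    by (rule abs_edgeprod_le_1[OF H]) (auto simp: PiE_iff)
  then have "integrable unifM (\<lambda>x. condE m (edgeprod w H) {i} (\<lambda>_. x))" if "i \<in> {1..m}" for i
    by (rule integrable_condE_singleton[OF edgeprod_measurable[OF H] _ that])
  then have S: "integrable unifM S"
    unfolding S_def by (intro integrable_mult_right Bochner_Integration.integrable_sum)
  have "(AE x in unifM. condE m (kernelH w m H) {1} (\<lambda>_. x) = c)
      \<longleftrightarrow> (AE x in unifM. a * S x = c)" for c
    by (rule AE_cong) (simp only: K)
  then have "(\<exists>c. AE x in unifM. condE m (kernelH w m H) {1} (\<lambda>_. x) = c)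
      \<longleftrightarrow> (\<exists>c. AE x in unifM. a * S x = c)"
    by simp
  also have "\<dots> \<longleftrightarrow> (\<exists>c. AE x in unifM. S x = c)"
    using a by (intro AE_const_iff_AE_const_mult) simp
  also have "\<dots> \<longleftrightarrow> (AE x in unifM. S x = (\<integral>x. S x \<partial>unifM))"
    by (rule AE_const_iff_AE_eq_integral[OF S])
  finally show ?thesis
    unfolding integral_mean_condE_edgeprod[OF H m, folded S_def] by (simp add: S_def)
qed

end

section \<open>Asymptotics of \<open>sigma2\<close> and \<open>rho\<close>\<close>

lemma binomial_diff_le:
  assumes "k \<le> b" "b \<le> a"
  shows "(a - k) choose (b - k) \<le> a choose (b::nat)"
  using assms
proof (induction k)
  case (Suc k)
  then have "a - k = Suc (a - Suc k)" "b - k = Suc (b - Suc k)" by auto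
  then have "(a - Suc k) choose (b - Suc k) \<le> (a - k) choose (b - k)" by simp
  also have "\<dots> \<le> a choose b" using Suc by simp
  finally show ?case .
qed simp

lemma binomial_le_power_real: "real (n choose k) \<le> real n ^ k"
proof (cases "k \<le> n")
  case True
  then show ?thesis
    by (metis binomial_le_pow of_nat_le_iff of_nat_power)
qed (simp add: binomial_eq_0)

lemma binomial_product_le_power:
  assumes "r \<le> m"
  shows "real (n choose m) * real ((n - r) choose (m - r)) \<le> real n ^ (2 * m - r)"
proof -
  have "real ((n - r) choose (m - r)) \<le> real (n - r) ^ (m - r)"
    by (rule binomial_le_power_real)
  also have "\<dots> \<le> real n ^ (m - r)"
    by (intro power_mono) auto
  finally have "real (n choose m) * real ((n - r) choose (m - r)) \<le> real n ^ m * real n ^ (m - r)"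
    by (intro mult_mono binomial_le_power_real) auto
  also have "\<dots> = real n ^ (m + (m - r))"
    by (simp only: power_add)
  also have "m + (m - r) = 2 * m - r"
    using assms by simp
  finally show ?thesis .
qed

lemma sigma2_bigo:
  assumes "r \<le> m"
  shows "(\<lambda>n. sigma2 w m H n r) \<in> O(\<lambda>n. real n ^ (2 * m - r))"
proof -
  define C where "C = real (m choose r) * Var (unifPi {1..r}) (condE m (kernelH w m H) {1..r})"
  have "\<bar>sigma2 w m H n r\<bar> \<le> \<bar>C\<bar> * real n ^ (2 * m - r)" for n
  proof -
    have "\<bar>sigma2 w m H n r\<bar> = \<bar>C\<bar> * (real (n choose m) * real ((n - r) choose (m - r)))"
      by (simp add: sigma2_def C_def abs_mult)
    also have "\<dots> \<le> \<bar>C\<bar> * real n ^ (2 * m - r)"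
      by (intro mult_left_mono binomial_product_le_power assms) simp
    finally show ?thesis .
  qed
  then show ?thesis
    by (intro bigoI[where c = "\<bar>C\<bar>"] always_eventually) simp
qed

lemma sigma2_1_eq_0_iff:
  assumes "1 \<le> m" "m \<le> n"
  shows "sigma2 w m H n 1 = 0 \<longleftrightarrow> Var (unifPi {1}) (condE m (kernelH w m H) {1}) = 0"
  using assms by (auto simp: sigma2_def)

lemma binomial_tail_le:
  assumes "r \<in> {2..m}" "m \<le> n"
  shows "(n - r) choose (m - r) \<le> (n - 2) choose (m - 2)"
proof -
  have "(n - 2 - (r - 2)) choose (m - 2 - (r - 2)) \<le> (n - 2) choose (m - 2)"
    by (rule binomial_diff_le) (use assms in auto)
  moreover have "n - 2 - (r - 2) = n - r" "m - 2 - (r - 2) = m - r"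
    using assms by auto
  ultimately show ?thesis
    by (simp only:)
qed

lemma binomial_pred_eq:
  assumes "2 \<le> m" "m \<le> n"
  shows "((n - 1) choose (m - 1)) * (m - 1) = (n - 1) * ((n - 2) choose (m - 2))"
proof -
  have "n - 1 = Suc (n - 2)" "m - 1 = Suc (m - 2)" using assms by auto
  then show ?thesis
    by (simp only: Suc_times_binomial_eq)
qed

lemma binomial_weighted_ratio_eventually_less:
  fixes V :: "nat \<Rightarrow> real" and m :: nat
  defines "s n r \<equiv> real (m choose r) * real (n choose m) * real ((n - r) choose (m - r)) * V r"
  assumes m: "2 \<le> m" and V1: "V 1 > 0" and c: "c > 0"
  shows "\<forall>\<^sub>F n in sequentially. (\<Sum>r=2..m. s n r) / s n 1 < c"
proof -
  define D where "D = (\<Sum>r=2..m. real (m choose r) * \<bar>V r\<bar>)"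
  define K where "K = D * real (m - 1) / (real m * V 1)"
  have bound: "(\<Sum>r=2..m. s n r) / s n 1 \<le> K / (real n - 1)" if n: "m \<le> n" for n
  proof -
    \<comment> \<open>\<open>X\<close> dominates \<open>(n choose m) ((n - r) choose (m - r))\<close> for \<open>r \<ge> 2\<close> and is
      \<open>(m - 1)/(n - 1)\<close> times its value at \<open>r = 1\<close>\<close>
    define X where "X = real (n choose m) * real ((n - 2) choose (m - 2))"
    have "s n r \<le> real (m choose r) * \<bar>V r\<bar> * X" if r: "r \<in> {2..m}" for r
    proof -
      have "s n r \<le> real (m choose r) * real (n choose m) * real ((n - r) choose (m - r)) * \<bar>V r\<bar>"
        unfolding s_def by (intro mult_left_mono) auto
      also have "\<dots> \<le> real (m choose r) * real (n choose m) * real ((n - 2) choose (m - 2)) * \<bar>V r\<bar>"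
        using binomial_tail_le[OF r n] by (intro mult_right_mono mult_left_mono) auto
      finally show ?thesis
        by (simp add: X_def mult_ac)
    qed
    then have "(\<Sum>r=2..m. s n r) \<le> D * X"
      unfolding D_def sum_distrib_right by (rule sum_mono)
    moreover have "s n 1 * real (m - 1) = real m * V 1 * (real n - 1) * X"
      using arg_cong[OF binomial_pred_eq[OF m n], of real] m n
      by (simp add: s_def X_def of_nat_diff mult_ac)
    moreover have "s n 1 > 0" "X > 0" "real n - 1 > 0"
      using m n V1 by (auto simp: s_def X_def)
    ultimately show ?thesis
      using m V1 by (simp add: K_def divide_simps mult_ac)
  qed
  have "(\<lambda>n. K / (real n - 1)) \<longlonglongrightarrow> 0"
    by real_asymp
  then have "\<forall>\<^sub>F n in sequentially. K / (real n - 1) < c"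
    using c by (rule order_tendstoD)
  then show ?thesis
    using eventually_ge_at_top[of m] by eventually_elim (use bound in force)
qed

lemma eventually_rho_ge_iff:
  assumes m: "2 \<le> m"
  shows "(\<exists>c>0. \<forall>\<^sub>F n in sequentially. rho w m H n \<ge> ereal c)
    \<longleftrightarrow> Var (unifPi {1}) (condE m (kernelH w m H) {1}) = 0"
proof
  let ?V = "\<lambda>r. Var (unifPi {1..r}) (condE m (kernelH w m H) {1..r})"
  assume "\<exists>c>0. \<forall>\<^sub>F n in sequentially. rho w m H n \<ge> ereal c"
  then obtain c where c: "c > 0" "\<forall>\<^sub>F n in sequentially. rho w m H n \<ge> ereal c"
    by blast
  show "Var (unifPi {1}) (condE m (kernelH w m H) {1}) = 0"
  proof (rule ccontr)
    assume "Var (unifPi {1}) (condE m (kernelH w m H) {1}) \<noteq> 0"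
    then have V1: "?V 1 > 0"
      using Var_nonneg[of "unifPi {1}"] by (simp add: order_less_le)
    have "\<forall>\<^sub>F n in sequentially. (\<Sum>r=2..m. sigma2 w m H n r) / sigma2 w m H n 1 < c"
      using binomial_weighted_ratio_eventually_less[of m ?V c] m V1 c(1) by (simp add: sigma2_def)
    with c(2) eventually_ge_at_top[of m]
    have "\<forall>\<^sub>F n in sequentially. m \<le> n \<and> rho w m H n \<ge> ereal c
        \<and> (\<Sum>r=2..m. sigma2 w m H n r) / sigma2 w m H n 1 < c"
      by eventually_elim blast
    then obtain n where n: "m \<le> n" "rho w m H n \<ge> ereal c"
      "(\<Sum>r=2..m. sigma2 w m H n r) / sigma2 w m H n 1 < c"
      by (auto simp: eventually_sequentially)
    moreover have "sigma2 w m H n 1 \<noteq> 0"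
      using sigma2_1_eq_0_iff[of m n w H] V1 m n(1) by simp
    ultimately show False
      by (simp add: rho_def)
  qed
next
  assume "Var (unifPi {1}) (condE m (kernelH w m H) {1}) = 0"
  then have "rho w m H n = \<infinity>" for n
    by (simp add: rho_def sigma2_def)
  then show "\<exists>c>0. \<forall>\<^sub>F n in sequentially. rho w m H n \<ge> ereal c"
    by (intro exI[of _ 1]) simp
qed

theorem lemmaA5:
  fixes w :: "real \<Rightarrow> real \<Rightarrow> real" and m :: nat and H :: "nat set set"
  assumes w_meas: "(\<lambda>(x, y). w x y) \<in> borel_measurable (unifM \<Otimes>\<^sub>M unifM)"
    and w_sym: "\<And>x y. x \<in> {0..1} \<Longrightarrow> y \<in> {0..1} \<Longrightarrow> w x y = w y x"
    and w_range: "\<And>x y. x \<in> {0..1} \<Longrightarrow> y \<in> {0..1} \<Longrightarrow> 0 \<le> w x y \<and> w x y \<le> 1"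
    and m_ge: "m \<ge> 2"
    and H_graph: "H \<subseteq> {e. e \<subseteq> {1..m} \<and> card e = 2}"
    and H_nonempty: "H \<noteq> {}"
  shows "(\<forall>r\<in>{1..m}. (\<lambda>n. sigma2 w m H n r) \<in> O(\<lambda>n. real n ^ (2 * m - r)))
    \<and> ((\<exists>c>0. \<forall>\<^sub>F n in sequentially. rho w m H n \<ge> ereal c)
          \<longleftrightarrow> (\<exists>n\<ge>m. sigma2 w m H n 1 = 0))
    \<and> ((\<exists>n\<ge>m. sigma2 w m H n 1 = 0) \<longleftrightarrow> (\<forall>n\<ge>m. sigma2 w m H n 1 = 0))
    \<and> ((\<forall>n\<ge>m. sigma2 w m H n 1 = 0)
          \<longleftrightarrow> (\<exists>c. AE x in unifM. condE m (kernelH w m H) {1} (\<lambda>_. x) = c))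
    \<and> ((\<exists>c. AE x in unifM. condE m (kernelH w m H) {1} (\<lambda>_. x) = c)
          \<longleftrightarrow> (AE x in unifM. (1 / real m) * (\<Sum>i=1..m. condE m (edgeprod w H) {i} (\<lambda>_. x))
                 = (\<integral>u. edgeprod w H u \<partial>unifPi {1..m})))"
proof -
  interpret graphon w
    using w_meas w_sym w_range by unfold_locales
  have H: "graph_on m H"
    using H_graph by (simp add: graph_on_def)
  have m: "1 \<le> m"
    using m_ge by simp
  have "(\<exists>n\<ge>m. sigma2 w m H n 1 = 0) \<longleftrightarrow> Var (unifPi {1}) (condE m (kernelH w m H) {1}) = 0"
    "(\<forall>n\<ge>m. sigma2 w m H n 1 = 0) \<longleftrightarrow> Var (unifPi {1}) (condE m (kernelH w m H) {1}) = 0"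
    using sigma2_1_eq_0_iff[OF m] by blast+
  then show ?thesis
    using sigma2_bigo eventually_rho_ge_iff[OF m_ge]
      Var_condE_kernelH_eq_0_iff[OF H m] AE_const_condE_kernelH_iff[OF H m]
    by auto
qed

end
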